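(* Let $r$ be a non-negative integer. If $r\neq 0$, then $$\sum_{k = 1}^\infty \frac{(-1)^{k(r-1)} \big(\frac{27}{5}\big)^k}{k^2\binom{3k}k F_r^{2k} } = 6\arctan^2 \bigg(\frac{\sqrt 3 }{2\sqrt[3]{\alpha^{2r}} + (-1)^{r}} \bigg) - \frac{1}{2}\log ^2 \bigg( \frac{\sqrt 5\,\alpha ^r F_r }{\big(\sqrt[3]{\alpha^{2r}} - ( - 1)^{r} \big)^3 } \bigg),$$ and if $r\neq 1$, then $$\sum_{k = 1}^\infty \frac{( - 1)^{kr} 27^k }{k^2 \binom{3k}k L_r^{2k} } = 6\arctan ^2 \bigg( \frac{ \sqrt 3 }{2\sqrt[3]{\alpha^{2r}} - ( - 1)^r } \bigg) - \frac{1}{2}\log ^2\bigg( \frac{\alpha ^r L_r }{\big(\sqrt[3]{\alpha^{2r}} + ( - 1)^r \big)^3 } \bigg).$$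
   Context: $F_n$ and $L_n$ are the Fibonacci and Lucas numbers: $F_0=0$, $F_1=1$, $L_0=2$, $L_1=1$, and $X_n=X_{n-1}+X_{n-2}$ for both sequences. $\alpha=(1+\sqrt5)/2$ is the golden ratio. $\sqrt[3]{t}$ denotes the real cube root. *)

theory Defs
  imports "HOL-Analysis.Analysis" "HOL-Number_Theory.Fib"
begin

fun lucas :: "nat \<Rightarrow> nat" where
  "lucas 0 = 2"
| "lucas (Suc 0) = 1"
| "lucas (Suc (Suc n)) = lucas (Suc n) + lucas n"

definition golden_ratio :: real where
  "golden_ratio = (1 + sqrt 5) / 2"

end

theory Submission
  imports Defs
begin

(* Let S(t) = sum_{n>=1} t^n / (n^2 C(3n,n)).  The coefficients of S'(t) are the Beta integrals
   B(2n+3, n+1) = int_0^1 x^(2n+2) (1-x)^n dx, so S'(t) = int_0^1 x^2 / (1 - t x^2 (1-x)) dx for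
   |t| < 27/4.  Under the substitution t = 27 u^3 / (1 + u^3)^2 the cubic 1 - t x^2 (1-x) splits
   into a linear and a positive quadratic factor in x, the integral becomes elementary, and
   comparing derivatives in u gives S(t) = 6 arctan^2 (sqrt 3 u / (2 - u)) - 1/2 ln^2 ((1-u+u^2)/(1+u)^2).
   The boundary point t = 27/4 (u = 1) follows by an Abelian limit, the coefficients being
   nonnegative.  With c = (alpha^(2r))^(1/3), the Binet formulas sqrt 5 alpha^r F_r = c^3 - (-1)^r
   and alpha^r L_r = c^3 + (-1)^r show that u = -(-1)^r / c and u = (-1)^r / c give
   t = (-1)^(r-1) 27 / (5 F_r^2) and t = (-1)^r 27 / L_r^2 respectively. *)

section \<open>The series and its derivative as Beta integrals\<close>

definition inv_binom3 :: "nat \<Rightarrow> real" where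
  "inv_binom3 n = 1 / (real n ^ 2 * real (3 * n choose n))"
  \<comment> \<open>Division by zero makes \<open>inv_binom3 0 = 0\<close>: the power series has no constant term.\<close>

lemma inv_binom3_nonneg: "0 \<le> inv_binom3 n"
  by (simp add: inv_binom3_def)

lemma diffs_inv_binom3_nonneg: "0 \<le> diffs inv_binom3 n"
  by (simp add: diffs_def inv_binom3_nonneg)

lemma inv_binom3_Suc_le: "inv_binom3 (Suc n) \<le> diffs inv_binom3 n"
  using inv_binom3_nonneg[of "Suc n"] by (simp add: diffs_def mult_le_cancel_right1)

lemma diffs_inv_binom3_eq_Beta:
  "diffs inv_binom3 n = Beta (real (2 * n + 3)) (real (n + 1))"
proof -
  have binom: "real (3 * Suc n choose Suc n) = fact (3 * n + 3) / (fact (Suc n) * fact (2 * n + 2))"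
    by (subst binomial_fact) (auto simp: algebra_simps)
  have Gamma_nat: "Gamma (real k + 1) = fact k" for k
    using Gamma_fact[of k] by (simp add: add.commute)
  have "Beta (real (2 * n + 3)) (real (n + 1))
      = Gamma (real (2 * n + 2) + 1) * Gamma (real n + 1) / Gamma (real (3 * n + 3) + 1)"
    unfolding Beta_def by (simp add: algebra_simps)
  also have "\<dots> = fact (2 * n + 2) * fact n / fact (3 * n + 3)"
    by (simp only: Gamma_nat)
  finally show ?thesis
    unfolding diffs_def inv_binom3_def binom
    by (simp add: field_simps power2_eq_square del: of_nat_Suc)
qed

lemma diffs_inv_binom3_has_integral:
  "((\<lambda>x. x ^ (2 * n + 2) * (1 - x) ^ n) has_integral diffs inv_binom3 n) {0..1::real}"
proof (rule has_integral_spike_finite[of "{0, 1}"])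
  fix x :: real assume "x \<in> {0..1} - {0, 1}"
  then have "0 < x" "0 < 1 - x" by auto
  have "real (2 * n + 3) - 1 = real (2 * n + 2)" "real (n + 1) - 1 = real n" by simp_all
  then show "x ^ (2 * n + 2) * (1 - x) ^ n
      = x powr (real (2 * n + 3) - 1) * (1 - x) powr (real (n + 1) - 1)"
    by (simp only: powr_realpow[OF \<open>0 < x\<close>] powr_realpow[OF \<open>0 < 1 - x\<close>])
next
  show "((\<lambda>x. x powr (real (2 * n + 3) - 1) * (1 - x) powr (real (n + 1) - 1))
      has_integral diffs inv_binom3 n) {0..1}"
    unfolding diffs_inv_binom3_eq_Beta by (rule has_integral_Beta_real) simp_all
qed simp

lemma power2_mult_one_minus_le: "0 \<le> x \<Longrightarrow> x ^ 2 * (1 - x) \<le> (4 / 27 :: real)"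
proof -
  assume "0 \<le> x"
  moreover have "4 / 27 - x ^ 2 * (1 - x) = (x - 2 / 3) ^ 2 * (x + 1 / 3)"
    by (simp add: power2_eq_square field_simps)
  moreover have "0 \<le> (x - 2 / 3) ^ 2 * (x + 1 / 3)"
    using \<open>0 \<le> x\<close> by simp
  ultimately show ?thesis by linarith
qed

lemma beta_integrand_eq: "x ^ (2 * n + 2) * (1 - x) ^ n = x ^ 2 * (x ^ 2 * (1 - x)) ^ n"
  for x :: real
  by (simp only: power_add power_mult power_mult_distrib) (simp add: mult_ac)

lemma diffs_inv_binom3_le: "diffs inv_binom3 n \<le> (4 / 27) ^ n"
proof (rule has_integral_le[OF diffs_inv_binom3_has_integral])
  show "((\<lambda>x. (4 / 27 :: real) ^ n) has_integral (4 / 27) ^ n) {0..1::real}"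
    using has_integral_const_real[of "(4 / 27 :: real) ^ n" 0 1] by simp
  fix x :: real assume x: "x \<in> {0..1}"
  have "x ^ 2 * (x ^ 2 * (1 - x)) ^ n \<le> 1 * (4 / 27) ^ n"
    using x by (intro mult_mono power_mono power2_mult_one_minus_le) (auto simp: power_le_one)
  then show "x ^ (2 * n + 2) * (1 - x) ^ n \<le> (4 / 27) ^ n"
    unfolding beta_integrand_eq by simp
qed

lemma summable_diffs_inv_binom3:
  assumes "\<bar>t\<bar> < 27 / 4"
  shows "summable (\<lambda>n. diffs inv_binom3 n * t ^ n)"
proof (rule summable_comparison_test')
  show "summable (\<lambda>n. (4 / 27 * \<bar>t\<bar>) ^ n)"
    using assms by (intro summable_geometric) auto
  fix n
  have "norm (diffs inv_binom3 n * t ^ n) = diffs inv_binom3 n * \<bar>t\<bar> ^ n"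
    using diffs_inv_binom3_nonneg by (simp add: abs_mult power_abs)
  also have "\<dots> \<le> (4 / 27) ^ n * \<bar>t\<bar> ^ n"
    by (intro mult_right_mono diffs_inv_binom3_le) simp
  finally show "norm (diffs inv_binom3 n * t ^ n) \<le> (4 / 27 * \<bar>t\<bar>) ^ n"
    by (simp only: power_mult_distrib)
qed

lemma summable_inv_binom3:
  assumes "\<bar>t\<bar> < 27 / 4"
  shows "summable (\<lambda>n. inv_binom3 n * t ^ n)"
proof (rule summable_Suc_iff[THEN iffD1], rule summable_comparison_test')
  show "summable (\<lambda>n. \<bar>t\<bar> * (4 / 27 * \<bar>t\<bar>) ^ n)"
    using assms by (intro summable_mult summable_geometric) auto
  fix n
  have "norm (inv_binom3 (Suc n) * t ^ Suc n) = \<bar>t\<bar> * \<bar>t\<bar> ^ n * inv_binom3 (Suc n)"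
    by (simp add: abs_mult power_abs inv_binom3_nonneg mult_ac)
  also have "\<dots> \<le> \<bar>t\<bar> * \<bar>t\<bar> ^ n * diffs inv_binom3 n"
    using inv_binom3_Suc_le by (rule mult_left_mono) simp
  also have "\<dots> \<le> \<bar>t\<bar> * \<bar>t\<bar> ^ n * (4 / 27) ^ n"
    by (intro mult_left_mono diffs_inv_binom3_le) simp
  also have "\<dots> = \<bar>t\<bar> * (4 / 27 * \<bar>t\<bar>) ^ n"
    by (simp only: power_mult_distrib mult_ac)
  finally show "norm (inv_binom3 (Suc n) * t ^ Suc n) \<le> \<bar>t\<bar> * (4 / 27 * \<bar>t\<bar>) ^ n" .
qed

lemma abs_mult_power2_one_minus_le:
  fixes t x :: real
  assumes "x \<in> {0..1}"
  shows "\<bar>t * (x ^ 2 * (1 - x))\<bar> \<le> 4 / 27 * \<bar>t\<bar>"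
proof -
  have "\<bar>t * (x ^ 2 * (1 - x))\<bar> = \<bar>t\<bar> * (x ^ 2 * (1 - x))"
    using assms by (simp add: abs_mult)
  also have "\<dots> \<le> \<bar>t\<bar> * (4 / 27)"
    using assms by (intro mult_left_mono power2_mult_one_minus_le) auto
  finally show ?thesis
    by (simp add: mult.commute)
qed

lemma geometric_partial_sum_has_integral:
  "((\<lambda>x. x ^ 2 * (\<Sum>k<N. (t * (x ^ 2 * (1 - x))) ^ k)) has_integral
     (\<Sum>k<N. diffs inv_binom3 k * t ^ k)) {0..1}"
proof -
  have "x ^ 2 * (t * (x ^ 2 * (1 - x))) ^ k = t ^ k * (x ^ (2 * k + 2) * (1 - x) ^ k)"
    for x :: real and k
    unfolding beta_integrand_eq by (simp only: power_mult_distrib mult_ac)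
  then have "((\<lambda>x. x ^ 2 * (\<Sum>k<N. (t * (x ^ 2 * (1 - x))) ^ k)) has_integral
      (\<Sum>k<N. t ^ k * diffs inv_binom3 k)) {0..1}"
    unfolding sum_distrib_left
    by (simp only:) (intro has_integral_sum finite_lessThan has_integral_mult_right
        diffs_inv_binom3_has_integral)
  then show ?thesis
    by (simp add: mult.commute)
qed

lemma diffs_inv_binom3_series_has_integral:
  assumes t: "\<bar>t\<bar> < 27 / 4"
  shows "((\<lambda>x. x ^ 2 / (1 - t * (x ^ 2 * (1 - x)))) has_integral
           (\<Sum>n. diffs inv_binom3 n * t ^ n)) {0..1}"
proof (rule has_integral_dominated_convergence[OF geometric_partial_sum_has_integral])
  define \<rho> where "\<rho> = 4 / 27 * \<bar>t\<bar>"
  have \<rho>: "0 \<le> \<rho>" "\<rho> < 1"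
    using t by (auto simp: \<rho>_def)
  show "\<forall>x\<in>{0..1}. norm (x ^ 2 * (\<Sum>k<N. (t * (x ^ 2 * (1 - x))) ^ k)) \<le> 1 / (1 - \<rho>)" for N
  proof
    fix x :: real assume x: "x \<in> {0..1}"
    have "norm (x ^ 2 * (\<Sum>k<N. (t * (x ^ 2 * (1 - x))) ^ k)) \<le> 1 * (\<Sum>k<N. \<rho> ^ k)"
      unfolding norm_mult
      using x abs_mult_power2_one_minus_le[OF x, of t]
      by (intro mult_mono order.trans[OF norm_sum] sum_mono)
         (auto simp: \<rho>_def power_le_one norm_power power_abs intro!: power_mono sum_nonneg)
    also have "\<dots> \<le> 1 / (1 - \<rho>)"
      using \<rho> sum_le_suminf[OF summable_geometric, of \<rho> "{..<N}"]
      by (simp add: suminf_geometric)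
    finally show "norm (x ^ 2 * (\<Sum>k<N. (t * (x ^ 2 * (1 - x))) ^ k)) \<le> 1 / (1 - \<rho>)" .
  qed
  show "\<forall>x\<in>{0..1}. (\<lambda>N. x ^ 2 * (\<Sum>k<N. (t * (x ^ 2 * (1 - x))) ^ k))
      \<longlonglongrightarrow> x ^ 2 / (1 - t * (x ^ 2 * (1 - x)))"
  proof
    fix x :: real assume x: "x \<in> {0..1}"
    define q where "q = t * (x ^ 2 * (1 - x))"
    have "norm q < 1"
      using abs_mult_power2_one_minus_le[OF x, of t] \<rho> by (simp add: q_def \<rho>_def)
    then have "(\<lambda>k. x ^ 2 * q ^ k) sums (x ^ 2 * (1 / (1 - q)))"
      by (intro sums_mult geometric_sums)
    then show "(\<lambda>N. x ^ 2 * (\<Sum>k<N. q ^ k)) \<longlonglongrightarrow> x ^ 2 / (1 - q)"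
      unfolding sums_def by (simp add: sum_distrib_left)
  qed
  show "(\<lambda>N. \<Sum>n<N. diffs inv_binom3 n * t ^ n) \<longlonglongrightarrow> (\<Sum>n. diffs inv_binom3 n * t ^ n)"
    using summable_diffs_inv_binom3[OF t] by (simp add: summable_LIMSEQ)
qed (rule integrable_const_ivl)

section \<open>The rational parametrisation of t\<close>

definition t_param :: "real \<Rightarrow> real" where
  "t_param u = 27 * u ^ 3 / (1 + u ^ 3) ^ 2"

definition arctan_term :: "real \<Rightarrow> real" where
  "arctan_term u = arctan (sqrt 3 * u / (2 - u))"

definition log_term :: "real \<Rightarrow> real" where
  "log_term u = ln ((1 - u + u ^ 2) / (1 + u) ^ 2)"

definition closed_form :: "real \<Rightarrow> real" where
  "closed_form u = 6 * arctan_term u ^ 2 - 1 / 2 * log_term u ^ 2"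

lemma one_minus_plus_square_pos: "0 < 1 - u + (u::real) ^ 2"
proof -
  have "1 - u + u ^ 2 = (u - 1 / 2) ^ 2 + 3 / 4"
    by (simp add: power2_eq_square algebra_simps)
  then show ?thesis
    by (metis add_nonneg_pos zero_le_power2 zero_less_divide_iff zero_less_numeral)
qed

lemma one_plus_cube_eq: "1 + u ^ 3 = (1 + u) * (1 - u + (u::real) ^ 2)"
  by algebra

lemma one_plus_cube_pos: "-1 < u \<Longrightarrow> 0 < 1 + (u::real) ^ 3"
  unfolding one_plus_cube_eq using one_minus_plus_square_pos by simp

lemma has_real_derivative_arctan_term:
  assumes "u < 2"
  shows "(arctan_term has_real_derivative sqrt 3 / (2 * (1 - u + u ^ 2))) (at u)"
proof -
  have "(2 - u) ^ 2 + 3 * u ^ 2 = 4 * (1 - u + u ^ 2)"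
    by algebra
  then show ?thesis
    unfolding arctan_term_def[abs_def]
    using assms one_minus_plus_square_pos[of u]
    by (auto intro!: derivative_eq_intros simp: divide_simps)
       (simp add: algebra_simps power2_eq_square)
qed

lemma has_real_derivative_log_term:
  assumes "-1 < u"
  shows "(log_term has_real_derivative 3 * (u - 1) / (1 + u ^ 3)) (at u)"
  unfolding log_term_def[abs_def] one_plus_cube_eq
  using assms one_minus_plus_square_pos[of u]
  by (auto intro!: derivative_eq_intros simp: divide_simps) algebra

lemma has_real_derivative_t_param:
  assumes "-1 < u"
  shows "(t_param has_real_derivative 81 * u ^ 2 * (1 - u ^ 3) / (1 + u ^ 3) ^ 3) (at u)"
  unfolding t_param_def[abs_def]
  using one_plus_cube_pos[OF assms]
  by (auto intro!: derivative_eq_intros simp: divide_simps) algebra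

lemma arctan_triple_identity:
  assumes "-1 < u" "u < 1"
  shows "arctan ((1 + u) / (sqrt 3 * (1 - u))) - arctan ((1 - 4 * u + u ^ 2) / (sqrt 3 * (1 - u ^ 2)))
           = 3 * arctan_term u"
proof -
  define E where "E v = arctan ((1 + v) / (sqrt 3 * (1 - v)))
      - arctan ((1 - 4 * v + v ^ 2) / (sqrt 3 * (1 - v ^ 2))) - 3 * arctan_term v" for v
  have "(E has_real_derivative 0) (at v within {-1<..<1})" if v: "v \<in> {-1<..<1}" for v
  proof -
    have nz: "0 < 1 - v + v ^ 2" "1 - v \<noteq> 0" "1 - v ^ 2 \<noteq> 0"
      using v one_minus_plus_square_pos[of v] by (auto simp: power2_eq_1_iff)
    have "3 * (1 - v) ^ 2 + (1 + v) ^ 2 = 4 * (1 - v + v ^ 2)"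
      by algebra
    then have d1: "((\<lambda>v. arctan ((1 + v) / (sqrt 3 * (1 - v)))) has_real_derivative
        sqrt 3 / (2 * (1 - v + v ^ 2))) (at v)"
      using nz by (auto intro!: derivative_eq_intros simp: divide_simps)
        (simp add: algebra_simps power2_eq_square)
    have "3 * (1 - v ^ 2) ^ 2 + (1 - 4 * v + v ^ 2) ^ 2 = 4 * (1 - v + v ^ 2) ^ 2"
      by algebra
    then have d2: "((\<lambda>v. arctan ((1 - 4 * v + v ^ 2) / (sqrt 3 * (1 - v ^ 2)))) has_real_derivative
        - sqrt 3 / (1 - v + v ^ 2)) (at v)"
      using nz by (auto intro!: derivative_eq_intros simp: divide_simps)
        (simp add: algebra_simps power2_eq_square)
    have "(E has_real_derivative
        sqrt 3 / (2 * (1 - v + v ^ 2)) - - sqrt 3 / (1 - v + v ^ 2)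
          - 3 * (sqrt 3 / (2 * (1 - v + v ^ 2)))) (at v)"
      unfolding E_def[abs_def]
      using v by (intro DERIV_diff DERIV_cmult d1 d2 has_real_derivative_arctan_term) auto
    moreover have "sqrt 3 / (2 * m) - - sqrt 3 / m - 3 * (sqrt 3 / (2 * m)) = 0" for m :: real
      by (cases "m = 0") (simp_all add: field_simps)
    ultimately show ?thesis
      by (metis has_field_derivative_at_within)
  qed
  then obtain c where "\<forall>v\<in>{-1<..<1}. E v = c"
    using has_field_derivative_zero_constant[of "{-1<..<1}" E] by auto
  moreover have "E 0 = 0"
    by (simp add: E_def arctan_term_def)
  ultimately have "E u = 0"
    using assms by force
  then show ?thesis
    by (simp add: E_def)
qed

definition quadratic_factor :: "real \<Rightarrow> real \<Rightarrow> real" where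
  "quadratic_factor u x = (1 - u + u ^ 2) * (1 + u) ^ 2 - 3 * u * (1 + u) ^ 2 * x + 9 * u ^ 2 * x ^ 2"

lemma quadratic_factor_eq:
  "4 * quadratic_factor u x = 3 * (1 - u ^ 2) ^ 2 + (6 * u * x - (1 + u) ^ 2) ^ 2"
  unfolding quadratic_factor_def by algebra

lemma quadratic_factor_pos:
  assumes "-1 < u" "u < (1::real)"
  shows "0 < quadratic_factor u x"
proof -
  have "0 < 3 * (1 - u ^ 2) ^ 2"
    using assms by (simp add: power2_eq_1_iff)
  then have "0 < 4 * quadratic_factor u x"
    unfolding quadratic_factor_eq by (simp add: add_pos_nonneg)
  then show ?thesis by simp
qed

lemma linear_factor_pos:
  assumes "-1 < u" "0 \<le> (x::real)" "x \<le> 1"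
  shows "0 < 1 - u + u ^ 2 + 3 * u * x"
proof (cases "0 \<le> u")
  case True
  then show ?thesis
    using assms one_minus_plus_square_pos[of u] by (simp add: add_pos_nonneg)
next
  case False
  then have "3 * u \<le> 3 * u * x"
    using assms by (simp add: mult_le_cancel_left1)
  moreover have "0 < (1 + u) ^ 2"
    using assms by simp
  moreover have "(1 + u) ^ 2 = 1 - u + u ^ 2 + 3 * u"
    by algebra
  ultimately show ?thesis by linarith
qed

lemma one_minus_t_param_factor:
  assumes "-1 < u"
  shows "1 - t_param u * (x ^ 2 * (1 - x))
           = (1 - u + u ^ 2 + 3 * u * x) * quadratic_factor u x / (1 + u ^ 3) ^ 2"
  using one_plus_cube_pos[OF assms]
  by (simp add: t_param_def quadratic_factor_def divide_simps) algebra

(* Partial fractions for the factorisation in one_minus_t_param_factor; the arctan term comes from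
   completing the square in quadratic_factor_eq. *)
definition t_param_antideriv :: "real \<Rightarrow> real \<Rightarrow> real" where
  "t_param_antideriv u x =
     (1 - u + u ^ 2) / (3 * u) * ln (1 - u + u ^ 2 + 3 * u * x)
     + (1 + u) ^ 2 / (3 * u) * ln (quadratic_factor u x)
     + 2 * sqrt 3 * (1 + u) / (3 * (1 - u)) * arctan ((6 * u * x - (1 + u) ^ 2) / (sqrt 3 * (1 - u ^ 2)))"

lemma has_real_derivative_arctan_quadratic_factor:
  assumes u: "-1 < u" "u < 1"
  shows "((\<lambda>x. arctan ((6 * u * x - (1 + u) ^ 2) / (sqrt 3 * (1 - u ^ 2)))) has_real_derivative
           9 * u * (1 - u ^ 2) / (2 * sqrt 3 * quadratic_factor u x)) (at x)"
proof -
  define Q where "Q = quadratic_factor u x"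
  define y where "y = (6 * u * x - (1 + u) ^ 2) / (sqrt 3 * (1 - u ^ 2))"
  have "1 - u ^ 2 \<noteq> 0" "0 < Q"
    using u quadratic_factor_pos by (auto simp: Q_def power2_eq_1_iff)
  have "1 + y ^ 2 = (3 * (1 - u ^ 2) ^ 2 + (6 * u * x - (1 + u) ^ 2) ^ 2) / (3 * (1 - u ^ 2) ^ 2)"
    using u by (simp add: y_def power_divide power_mult_distrib add_divide_distrib power2_eq_1_iff)
  also have "\<dots> = 4 * Q / (3 * (1 - u ^ 2) ^ 2)"
    unfolding Q_def quadratic_factor_eq ..
  finally have "inverse (1 + y ^ 2) * (6 * u / (sqrt 3 * (1 - u ^ 2)))
      = 3 * (1 - u ^ 2) ^ 2 / (4 * Q) * (6 * u / (sqrt 3 * (1 - u ^ 2)))"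
    by simp
  also have "\<dots> = 9 * u * (1 - u ^ 2) / (2 * sqrt 3 * Q)"
    using \<open>1 - u ^ 2 \<noteq> 0\<close> \<open>0 < Q\<close> by (simp add: field_simps power2_eq_square)
  finally have deriv_eq: "inverse (1 + y ^ 2) * (6 * u / (sqrt 3 * (1 - u ^ 2)))
      = 9 * u * (1 - u ^ 2) / (2 * sqrt 3 * Q)" .
  have "((\<lambda>x. (6 * u * x - (1 + u) ^ 2) / (sqrt 3 * (1 - u ^ 2))) has_real_derivative
      6 * u / (sqrt 3 * (1 - u ^ 2))) (at x)"
    using u by (auto intro!: derivative_eq_intros simp: power2_eq_1_iff)
  from DERIV_chain2[OF DERIV_arctan this] show ?thesis
    unfolding y_def[symmetric] deriv_eq Q_def .
qed

lemma has_real_derivative_t_param_antideriv: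
  assumes u: "-1 < u" "u < 1" "u \<noteq> 0" and x: "0 < 1 - u + u ^ 2 + 3 * u * x"
  shows "(t_param_antideriv u has_real_derivative
           27 * u ^ 2 * (1 + u + u ^ 2) * x ^ 2 / ((1 - u + u ^ 2 + 3 * u * x) * quadratic_factor u x))
         (at x)"
proof -
  define m where "m = 1 - u + u ^ 2"
  define l where "l = m + 3 * u * x"
  define Q where "Q = quadratic_factor u x"
  have nz: "1 - u \<noteq> 0" "1 + u \<noteq> 0"
    using u by auto
  have "0 < l" "0 < Q"
    using x quadratic_factor_pos u by (auto simp: l_def m_def Q_def)
  have "(quadratic_factor u has_real_derivative 3 * u * (6 * u * x - (1 + u) ^ 2)) (at x)"
    unfolding quadratic_factor_def[abs_def]
    by (auto intro!: derivative_eq_intros simp: algebra_simps power2_eq_square)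
  then have "((\<lambda>x. ln (quadratic_factor u x)) has_real_derivative
      3 * u * (6 * u * x - (1 + u) ^ 2) / Q) (at x)"
    using \<open>0 < Q\<close> unfolding Q_def by (auto intro!: derivative_eq_intros)
  moreover have "((\<lambda>x. ln (1 - u + u ^ 2 + 3 * u * x)) has_real_derivative 3 * u / l) (at x)"
    using \<open>0 < l\<close> unfolding l_def m_def by (auto intro!: derivative_eq_intros)
  ultimately have "(t_param_antideriv u has_real_derivative
      m / (3 * u) * (3 * u / l) + (1 + u) ^ 2 / (3 * u) * (3 * u * (6 * u * x - (1 + u) ^ 2) / Q)
      + 2 * sqrt 3 * (1 + u) / (3 * (1 - u)) * (9 * u * (1 - u ^ 2) / (2 * sqrt 3 * Q))) (at x)"
    unfolding t_param_antideriv_def[abs_def] m_def Q_def using u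
    by (intro DERIV_add DERIV_cmult has_real_derivative_arctan_quadratic_factor)
  moreover have "m / (3 * u) * (3 * u / l) + (1 + u) ^ 2 / (3 * u) * (3 * u * (6 * u * x - (1 + u) ^ 2) / Q)
      + 2 * sqrt 3 * (1 + u) / (3 * (1 - u)) * (9 * u * (1 - u ^ 2) / (2 * sqrt 3 * Q))
      = m / l + (1 + u) ^ 2 * (6 * u * x - (1 + u) ^ 2 + 3 * u) / Q"
    using u nz \<open>0 < l\<close> \<open>0 < Q\<close> by (simp add: field_simps) algebra
  moreover have "m / l + (1 + u) ^ 2 * (6 * u * x - (1 + u) ^ 2 + 3 * u) / Q
      = 27 * u ^ 2 * (1 + u + u ^ 2) * x ^ 2 / (l * Q)"
    using \<open>0 < l\<close> \<open>0 < Q\<close> unfolding Q_def l_def m_def quadratic_factor_def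
    by (simp add: divide_simps) algebra
  ultimately show ?thesis
    by (simp add: l_def m_def Q_def)
qed

lemma t_param_antideriv_diff:
  assumes u: "-1 < u" "u < 1" "u \<noteq> 0"
  shows "t_param_antideriv u 1 - t_param_antideriv u 0
           = log_term u + 2 * sqrt 3 * (1 + u) / (1 - u) * arctan_term u"
proof -
  define m where "m = 1 - u + u ^ 2"
  have "0 < m" "0 < (1 + u) ^ 2"
    using u one_minus_plus_square_pos[of u] by (auto simp: m_def)
  have nz: "1 - u \<noteq> 0" "1 + u \<noteq> 0"
    using u by auto
  have lin: "1 - u + u ^ 2 + 3 * u * 1 = (1 + u) ^ 2" "1 - u + u ^ 2 + 3 * u * 0 = m"
    by (simp_all add: m_def) algebra
  have quad: "quadratic_factor u 1 = m ^ 2" "quadratic_factor u 0 = m * (1 + u) ^ 2"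
    by (simp_all add: quadratic_factor_def m_def) algebra
  have "(6 * u * 1 - (1 + u) ^ 2) / (sqrt 3 * (1 - u ^ 2))
      = - ((1 - 4 * u + u ^ 2) / (sqrt 3 * (1 - u ^ 2)))"
    by (simp add: field_simps) algebra
  moreover have "(6 * u * 0 - (1 + u) ^ 2) / (sqrt 3 * (1 - u ^ 2)) = - ((1 + u) / (sqrt 3 * (1 - u)))"
  proof -
    have fac: "1 - u ^ 2 = (1 - u) * (1 + u)"
      by algebra
    show ?thesis
      unfolding fac using nz by (simp add: divide_simps) (simp add: algebra_simps power2_eq_square)
  qed
  ultimately have arctans: "arctan ((6 * u * 1 - (1 + u) ^ 2) / (sqrt 3 * (1 - u ^ 2)))
      = arctan ((6 * u * 0 - (1 + u) ^ 2) / (sqrt 3 * (1 - u ^ 2))) + 3 * arctan_term u"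
    using arctan_triple_identity[OF u(1,2)] by (simp add: arctan_minus)
  define a0 where "a0 = arctan ((6 * u * 0 - (1 + u) ^ 2) / (sqrt 3 * (1 - u ^ 2)))"
  define Lm where "Lm = ln m"
  define Lq where "Lq = ln ((1 + u) ^ 2)"
  have logs: "ln (m ^ 2) = 2 * Lm" "ln (m * (1 + u) ^ 2) = Lm + Lq" "log_term u = Lm - Lq"
    using \<open>0 < m\<close> \<open>0 < (1 + u) ^ 2\<close>
    by (simp_all add: Lm_def Lq_def ln_realpow ln_mult log_term_def m_def ln_div)
  have "t_param_antideriv u 1 - t_param_antideriv u 0
      = ((1 + u) ^ 2 - m) / (3 * u) * (Lm - Lq) + 2 * sqrt 3 * (1 + u) / (3 * (1 - u)) * (3 * arctan_term u)"
    unfolding t_param_antideriv_def lin quad arctans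
    unfolding m_def[symmetric] logs Lm_def[symmetric] Lq_def[symmetric] a0_def[symmetric]
    by (simp add: algebra_simps diff_divide_distrib add_divide_distrib)
  also have "(1 + u) ^ 2 - m = 3 * u"
    unfolding m_def by algebra
  finally show ?thesis
    using u(3) nz by (simp add: logs field_simps)
qed

lemma diffs_inv_binom3_series_t_param:
  assumes u: "-1 < u" "u < 1" "u \<noteq> 0" and t: "\<bar>t_param u\<bar> < 27 / 4"
  shows "(\<Sum>n. diffs inv_binom3 n * t_param u ^ n)
           = (1 + u ^ 3) ^ 2 / (27 * u ^ 2 * (1 + u + u ^ 2))
               * (log_term u + 2 * sqrt 3 * (1 + u) / (1 - u) * arctan_term u)"
proof -
  define N where "N = 1 + u + u ^ 2"
  define W where "W = (1 + u ^ 3) ^ 2 / (27 * u ^ 2 * N)"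
  have "0 < 1 + u ^ 3" "0 < N"
    using one_plus_cube_pos[OF u(1)] one_minus_plus_square_pos[of "-u"] by (simp_all add: N_def)
  have "((\<lambda>x. x ^ 2 / (1 - t_param u * (x ^ 2 * (1 - x)))) has_integral
      W * t_param_antideriv u 1 - W * t_param_antideriv u 0) {0..1}"
  proof (rule fundamental_theorem_of_calculus)
    fix x :: real assume x: "x \<in> {0..1}"
    define l where "l = 1 - u + u ^ 2 + 3 * u * x"
    have "0 < l" "0 < quadratic_factor u x"
      using x u linear_factor_pos quadratic_factor_pos by (auto simp: l_def)
    have "W * (27 * u ^ 2 * N * x ^ 2 / (l * quadratic_factor u x))
        = x ^ 2 / (1 - t_param u * (x ^ 2 * (1 - x)))"
      unfolding W_def one_minus_t_param_factor[OF u(1)] l_def[symmetric]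
      using u(3) \<open>0 < l\<close> \<open>0 < quadratic_factor u x\<close> \<open>0 < 1 + u ^ 3\<close> \<open>0 < N\<close>
      by (simp add: field_simps)
    moreover have "((\<lambda>x. W * t_param_antideriv u x) has_real_derivative
        W * (27 * u ^ 2 * N * x ^ 2 / (l * quadratic_factor u x))) (at x within {0..1})"
      unfolding l_def N_def
      by (rule has_field_derivative_at_within, rule DERIV_cmult, rule has_real_derivative_t_param_antideriv)
         (use u \<open>0 < l\<close> in \<open>simp_all add: l_def\<close>)
    ultimately show "((\<lambda>x. W * t_param_antideriv u x) has_vector_derivative
        x ^ 2 / (1 - t_param u * (x ^ 2 * (1 - x)))) (at x within {0..1})"
      by (simp add: has_real_derivative_iff_has_vector_derivative)
  qed simp
  with diffs_inv_binom3_series_has_integral[OF t]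
  have "(\<Sum>n. diffs inv_binom3 n * t_param u ^ n)
      = W * (t_param_antideriv u 1 - t_param_antideriv u 0)"
    unfolding right_diff_distrib by (rule has_integral_unique)
  then show ?thesis
    unfolding t_param_antideriv_diff[OF u] W_def N_def .
qed

lemma diffs_inv_binom3_series_t_param_mult_deriv:
  assumes u: "-1 < u" "u < 1" and t: "\<bar>t_param u\<bar> < 27 / 4"
  shows "(\<Sum>n. diffs inv_binom3 n * t_param u ^ n) * (81 * u ^ 2 * (1 - u ^ 3) / (1 + u ^ 3) ^ 3)
           = 12 * arctan_term u * (sqrt 3 / (2 * (1 - u + u ^ 2)))
             - log_term u * (3 * (u - 1) / (1 + u ^ 3))"
proof (cases "u = 0")
  case True
  then show ?thesis
    by (simp add: arctan_term_def log_term_def)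
next
  case False
  define m where "m = 1 - u + u ^ 2"
  define N where "N = 1 + u + u ^ 2"
  define p where "p = 1 + u"
  define q where "q = 1 - u"
  have "0 < m" "0 < N" "p \<noteq> 0" "q \<noteq> 0"
    using u one_minus_plus_square_pos[of u] one_minus_plus_square_pos[of "-u"]
    by (auto simp: m_def N_def p_def q_def)
  have cubes: "1 + u ^ 3 = p * m" "1 - u ^ 3 = q * N" "u - 1 = - q"
    unfolding m_def N_def p_def q_def by algebra+
  show ?thesis
    unfolding diffs_inv_binom3_series_t_param[OF u False t] cubes
    unfolding m_def[symmetric] N_def[symmetric]
    unfolding p_def[symmetric] q_def[symmetric]
    using False \<open>0 < m\<close> \<open>0 < N\<close> \<open>p \<noteq> 0\<close> \<open>q \<noteq> 0\<close>
    by (simp add: field_simps power2_eq_square power3_eq_cube)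
qed

lemma has_real_derivative_inv_binom3_series:
  assumes "\<bar>t\<bar> < 27 / 4"
  shows "((\<lambda>t. \<Sum>n. inv_binom3 n * t ^ n) has_real_derivative (\<Sum>n. diffs inv_binom3 n * t ^ n)) (at t)"
  using assms by (intro termdiffs_strong'[where K = "27 / 4"] summable_inv_binom3) auto

lemma has_real_derivative_closed_form:
  assumes "-1 < u" "u < 1"
  shows "(closed_form has_real_derivative
           12 * arctan_term u * (sqrt 3 / (2 * (1 - u + u ^ 2))) - log_term u * (3 * (u - 1) / (1 + u ^ 3)))
         (at u)"
proof -
  have "(closed_form has_real_derivative
      6 * (of_nat 2 * (sqrt 3 / (2 * (1 - u + u ^ 2)) * arctan_term u ^ (2 - Suc 0)))
      - 1 / 2 * (of_nat 2 * (3 * (u - 1) / (1 + u ^ 3) * log_term u ^ (2 - Suc 0)))) (at u)"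
    unfolding closed_form_def[abs_def] using assms
    by (intro DERIV_diff DERIV_cmult DERIV_power has_real_derivative_arctan_term
        has_real_derivative_log_term) auto
  then show ?thesis
    by (simp add: algebra_simps)
qed

lemma t_param_nonneg: "0 \<le> u \<Longrightarrow> 0 \<le> t_param u"
  by (simp add: t_param_def)

lemma t_param_less:
  assumes "0 \<le> u" "u < 1"
  shows "t_param u < 27 / 4"
proof -
  have "0 \<le> u ^ 3" "u ^ 3 < 1"
    using assms by (auto simp: power_less_one_iff)
  then have "0 < 27 * (1 - u ^ 3) ^ 2"
    by simp
  also have "27 * (1 - u ^ 3) ^ 2 = 27 * (1 + u ^ 3) ^ 2 - 4 * (27 * u ^ 3)"
    by algebra
  finally show ?thesis
    using \<open>0 \<le> u ^ 3\<close> by (simp add: t_param_def divide_simps add_pos_nonneg)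
qed

lemma abs_t_param_antimono_neg:
  assumes "-1 < u" "u \<le> v" "v \<le> 0"
  shows "\<bar>t_param v\<bar> \<le> \<bar>t_param u\<bar>"
proof -
  have cubes: "u ^ 3 \<le> v ^ 3" "v ^ 3 \<le> 0" "u ^ 3 \<le> 0"
    using assms by (auto simp: power_mono_odd)
  have abs_eq: "\<bar>t_param w\<bar> = 27 * - (w ^ 3) / (1 + w ^ 3) ^ 2" if "w ^ 3 \<le> 0" for w
    using that by (simp add: t_param_def abs_div abs_mult)
  have "27 * - (v ^ 3) / (1 + v ^ 3) ^ 2 \<le> 27 * - (u ^ 3) / (1 + u ^ 3) ^ 2"
    using cubes one_plus_cube_pos[OF assms(1)] by (intro frac_le power_mono) auto
  then show ?thesis
    unfolding abs_eq[OF cubes(2)] abs_eq[OF cubes(3)] .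
qed

lemma inv_binom3_series_t_param:
  assumes u: "-1 < u" "u < 1" and t: "\<bar>t_param u\<bar> < 27 / 4"
  shows "(\<Sum>n. inv_binom3 n * t_param u ^ n) = closed_form u"
proof -
  define I where "I = {min 0 u..max 0 u}"
  have I: "-1 < v \<and> v < 1 \<and> \<bar>t_param v\<bar> < 27 / 4" if "v \<in> I" for v
  proof (cases "0 \<le> u")
    case True
    with that u show ?thesis
      using t_param_nonneg[of v] t_param_less[of v] by (auto simp: I_def)
  next
    case False
    with that u show ?thesis
      using abs_t_param_antimono_neg[of u v] t by (auto simp: I_def)
  qed
  define D where "D v = (\<Sum>n. inv_binom3 n * t_param v ^ n) - closed_form v" for v
  have "(D has_real_derivative 0) (at v within I)" if "v \<in> I" for v
  proof -
    have "(D has_real_derivative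
        (\<Sum>n. diffs inv_binom3 n * t_param v ^ n) * (81 * v ^ 2 * (1 - v ^ 3) / (1 + v ^ 3) ^ 3)
        - (12 * arctan_term v * (sqrt 3 / (2 * (1 - v + v ^ 2)))
           - log_term v * (3 * (v - 1) / (1 + v ^ 3)))) (at v)"
      unfolding D_def[abs_def] using I[OF that]
      by (intro DERIV_diff DERIV_chain2[OF has_real_derivative_inv_binom3_series]
          has_real_derivative_t_param has_real_derivative_closed_form) auto
    then show ?thesis
      using I[OF that] diffs_inv_binom3_series_t_param_mult_deriv[of v]
      by (simp add: has_field_derivative_at_within)
  qed
  then obtain c where "\<forall>v\<in>I. D v = c"
    using has_field_derivative_zero_constant[of I D] by (auto simp: I_def)
  moreover have "0 \<in> I" "u \<in> I"
    by (auto simp: I_def)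
  moreover have "D 0 = 0"
    by (simp add: D_def t_param_def closed_form_def arctan_term_def log_term_def)
       (simp add: inv_binom3_def)
  ultimately show ?thesis
    by (simp add: D_def)
qed

section \<open>The boundary of the disc of convergence\<close>

lemma sums_at_radius_of_nonneg_powser:
  fixes a :: "nat \<Rightarrow> real"
  assumes a: "\<And>n. 0 \<le> a n" and F: "F \<noteq> bot"
    and g: "(g \<longlongrightarrow> R) F" and h: "(h \<longlongrightarrow> L) F"
    and ev: "\<forall>\<^sub>F x in F. 0 \<le> g x \<and> g x \<le> R \<and> (\<lambda>n. a n * g x ^ n) sums h x"
  shows "(\<lambda>n. a n * R ^ n) sums L"
proof -
  have partial: "(\<Sum>n<N. a n * R ^ n) \<le> L" for N
  proof (rule tendsto_le[OF F h])
    show "((\<lambda>x. \<Sum>n<N. a n * g x ^ n) \<longlongrightarrow> (\<Sum>n<N. a n * R ^ n)) F"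
      by (intro tendsto_intros g)
    show "\<forall>\<^sub>F x in F. (\<Sum>n<N. a n * g x ^ n) \<le> h x"
      using ev
    proof eventually_elim
      case (elim x)
      then have "h x = (\<Sum>n. a n * g x ^ n)" "summable (\<lambda>n. a n * g x ^ n)"
        by (simp_all add: sums_iff)
      then show ?case
        using elim by (auto intro!: sum_le_suminf simp: a)
    qed
  qed
  have summable: "summable (\<lambda>n. a n * R ^ n)"
    using eventually_happens'[OF F ev]
    by (intro summableI_nonneg_bounded[OF _ partial]) (auto simp: a)
  have "L \<le> (\<Sum>n. a n * R ^ n)"
  proof (rule tendsto_le[OF F tendsto_const h])
    show "\<forall>\<^sub>F x in F. h x \<le> (\<Sum>n. a n * R ^ n)"
      using ev
    proof eventually_elim
      case (elim x)
      then have "h x = (\<Sum>n. a n * g x ^ n)" "summable (\<lambda>n. a n * g x ^ n)"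
        by (simp_all add: sums_iff)
      then show ?case
        using elim summable by (auto intro!: suminf_le mult_left_mono power_mono simp: a)
    qed
  qed
  moreover have "(\<Sum>n. a n * R ^ n) \<le> L"
    by (rule suminf_le_const[OF summable partial])
  ultimately show ?thesis
    using summable by (simp add: sums_iff)
qed

lemma inv_binom3_sums_at_radius: "(\<lambda>n. inv_binom3 n * (27 / 4) ^ n) sums closed_form 1"
proof (rule sums_at_radius_of_nonneg_powser[OF inv_binom3_nonneg trivial_limit_at_left_real])
  have "isCont t_param 1"
    unfolding t_param_def[abs_def] by (intro continuous_intros) auto
  moreover have "isCont closed_form 1"
    unfolding closed_form_def[abs_def] arctan_term_def[abs_def] log_term_def[abs_def]
    by (intro continuous_intros) auto
  ultimately show "(t_param \<longlongrightarrow> 27 / 4) (at_left 1)" "(closed_form \<longlongrightarrow> closed_form 1) (at_left 1)"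
    by (auto simp: isCont_def t_param_def filterlim_at_split)
  have "\<forall>\<^sub>F u in at_left (1::real). u \<in> {0<..<1}"
    by (rule eventually_at_left_real) simp
  then show "\<forall>\<^sub>F u in at_left 1. 0 \<le> t_param u \<and> t_param u \<le> 27 / 4
      \<and> (\<lambda>n. inv_binom3 n * t_param u ^ n) sums closed_form u"
  proof eventually_elim
    case (elim u)
    then have "\<bar>t_param u\<bar> < 27 / 4"
      using t_param_nonneg t_param_less by auto
    then show ?case
      using elim t_param_nonneg inv_binom3_series_t_param[of u] summable_inv_binom3
      by (auto simp: sums_iff)
  qed
qed

lemma inv_binom3_sums_closed_form:
  assumes "-1 < u" "u \<le> 1" "\<bar>t_param u\<bar> < 27 / 4 \<or> u = 1"
  shows "(\<lambda>n. inv_binom3 n * t_param u ^ n) sums closed_form u"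
proof (cases "u = 1")
  case True
  then show ?thesis
    using inv_binom3_sums_at_radius by (simp add: t_param_def)
next
  case False
  then have "u < 1" "\<bar>t_param u\<bar> < 27 / 4"
    using assms by auto
  then show ?thesis
    using assms(1) summable_inv_binom3 inv_binom3_series_t_param by (simp add: sums_iff)
qed

lemma sums_closed_form_scaled:
  fixes a F :: real and m :: nat
  assumes "t_param u = (-1) ^ m * a / F ^ 2"
    and "-1 < u" "u \<le> 1" "\<bar>t_param u\<bar> < 27 / 4 \<or> u = 1"
  shows "(\<lambda>k. let n = Suc k in (-1) ^ (n * m) * a ^ n / (real n ^ 2 * real (3 * n choose n) * F ^ (2 * n)))
           sums closed_form u"
proof -
  have "(let n = Suc k in (-1) ^ (n * m) * a ^ n / (real n ^ 2 * real (3 * n choose n) * F ^ (2 * n)))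
      = inv_binom3 (Suc k) * t_param u ^ Suc k" for k
  proof -
    have "(-1::real) ^ (Suc k * m) = ((-1) ^ m) ^ Suc k" "F ^ (2 * Suc k) = (F ^ 2) ^ Suc k"
      by (simp_all only: power_mult mult.commute[of "Suc k"])
    then show ?thesis
      unfolding assms(1) inv_binom3_def Let_def power_divide power_mult_distrib
      by (simp add: divide_inverse ac_simps)
  qed
  moreover have "inv_binom3 0 * t_param u ^ 0 = 0"
    by (simp add: inv_binom3_def)
  ultimately show ?thesis
    using inv_binom3_sums_closed_form[OF assms(2-4)] sums_Suc_iff[of "\<lambda>n. inv_binom3 n * t_param u ^ n"]
    by simp
qed

lemma cube_plus_sign_eq:
  "e = 1 \<or> e = -1 \<Longrightarrow> c ^ 3 + e = (c + e) * (c ^ 2 - e * c + (1::real))"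
  by (auto simp: algebra_simps power2_eq_square power3_eq_cube)

lemma t_param_sign_div:
  assumes e: "e = 1 \<or> e = -1" and c: "0 < c" "c ^ 3 + e \<noteq> 0"
  shows "t_param (e / c) = 27 * e * c ^ 3 / (c ^ 3 + e) ^ 2"
proof -
  have "(e / c) ^ 3 = e / c ^ 3"
    using e by (auto simp: power_divide)
  moreover have "1 + e / c ^ 3 = (c ^ 3 + e) / c ^ 3"
    using c by (simp add: field_simps)
  ultimately show ?thesis
    using c by (simp add: t_param_def power_divide field_simps)
qed

lemma closed_form_sign_div:
  assumes e: "e = 1 \<or> e = -1" and c: "0 < c" "c + e \<noteq> 0"
  shows "closed_form (e / c)
           = 6 * arctan (sqrt 3 / (2 * c - e)) ^ 2 - 1 / 2 * ln ((c ^ 3 + e) / (c + e) ^ 3) ^ 2"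
proof -
  have "sqrt 3 * (e / c) / (2 - e / c) = e * (sqrt 3 / (2 * c - e))"
    using c by (simp add: field_simps)
  then have "arctan_term (e / c) ^ 2 = arctan (sqrt 3 / (2 * c - e)) ^ 2"
    using e by (auto simp: arctan_term_def arctan_minus)
  moreover have "(1 - e / c + (e / c) ^ 2) / (1 + e / c) ^ 2 = (c ^ 2 - e * c + 1) / (c + e) ^ 2"
  proof -
    have num: "1 - e / c + (e / c) ^ 2 = (c ^ 2 - e * c + 1) / c ^ 2"
      and den: "1 + e / c = (c + e) / c"
      using e c by (auto simp: field_simps power2_eq_square)
    have "(q / x ^ 2) / (y / x) ^ 2 = q / y ^ 2" if "x \<noteq> 0" for x y q :: real
      using that by (cases "y = 0") (simp_all add: field_simps power_divide)
    then show ?thesis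
      unfolding num den using c by simp
  qed
  moreover have "(c ^ 3 + e) / (c + e) ^ 3 = (c ^ 2 - e * c + 1) / (c + e) ^ 2"
  proof -
    have "x * q / x ^ 3 = q / x ^ 2" if "x \<noteq> 0" for x q :: real
      using that by (simp add: field_simps power3_eq_cube power2_eq_square)
    then show ?thesis
      using c by (simp add: cube_plus_sign_eq[OF e])
  qed
  ultimately show ?thesis
    by (simp add: closed_form_def log_term_def)
qed

lemma sums_closed_form_sign_div:
  fixes a c e F :: real and m :: nat
  assumes e: "e = 1 \<or> e = -1" and c: "1 \<le> c" "0 < c ^ 3 + e"
    and t: "27 * e * c ^ 3 / (c ^ 3 + e) ^ 2 = (-1) ^ m * a / F ^ 2"
    and bound: "27 * c ^ 3 / (c ^ 3 + e) ^ 2 < 27 / 4 \<or> c = 1"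
  shows "(\<lambda>k. let n = Suc k in (-1) ^ (n * m) * a ^ n / (real n ^ 2 * real (3 * n choose n) * F ^ (2 * n)))
           sums (6 * arctan (sqrt 3 / (2 * c - e)) ^ 2 - 1 / 2 * ln ((c ^ 3 + e) / (c + e) ^ 3) ^ 2)"
proof -
  have "c \<noteq> 1 \<or> e = 1"
    using c e by auto
  then have "c + e \<noteq> 0" "-1 < e / c" "e / c \<le> 1"
    using c e by (auto simp: field_simps)
  moreover have t_param: "t_param (e / c) = 27 * e * c ^ 3 / (c ^ 3 + e) ^ 2"
    using c by (intro t_param_sign_div e) auto
  moreover have "\<bar>t_param (e / c)\<bar> < 27 / 4 \<or> e / c = 1"
    using bound \<open>c \<noteq> 1 \<or> e = 1\<close> e c unfolding t_param by (auto simp: abs_mult)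
  ultimately have "(\<lambda>k. let n = Suc k in (-1) ^ (n * m) * a ^ n
      / (real n ^ 2 * real (3 * n choose n) * F ^ (2 * n))) sums closed_form (e / c)"
    using t by (intro sums_closed_form_scaled) simp_all
  then show ?thesis
    using closed_form_sign_div[OF e] c \<open>c + e \<noteq> 0\<close> by simp
qed

section \<open>Fibonacci and Lucas numbers\<close>

lemma golden_ratio_gt_1: "1 < golden_ratio"
  by (simp add: golden_ratio_def)

definition golden_ratio_conj :: real where
  "golden_ratio_conj = (1 - sqrt 5) / 2"

lemma golden_ratio_mult_conj: "golden_ratio * golden_ratio_conj = -1"
  by (simp add: golden_ratio_def golden_ratio_conj_def field_simps)

lemma lucas_closed_form: "real (lucas n) = golden_ratio ^ n + golden_ratio_conj ^ n"
proof (induction n rule: lucas.induct)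
  case (3 n)
  have rec: "x ^ Suc (Suc n) = x ^ Suc n + x ^ n" if "x ^ 2 = x + 1" for x :: real
  proof -
    have "x ^ Suc (Suc n) = x ^ n * x ^ 2"
      by (simp flip: power_add)
    then show ?thesis
      using that by (simp add: algebra_simps)
  qed
  have "golden_ratio ^ 2 = golden_ratio + 1" "golden_ratio_conj ^ 2 = golden_ratio_conj + 1"
    by (simp_all add: golden_ratio_def golden_ratio_conj_def power2_eq_square field_simps)
  then show ?case
    using 3 rec by simp
qed (simp_all add: golden_ratio_def golden_ratio_conj_def field_simps)

lemma golden_ratio_pow_mult_fib:
  "sqrt 5 * golden_ratio ^ r * real (fib r) = (golden_ratio ^ r) ^ 2 - (-1) ^ r"
proof -
  have "sqrt 5 * real (fib r) = golden_ratio ^ r - golden_ratio_conj ^ r"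
    using fib_closed_form[of r] by (simp add: golden_ratio_def golden_ratio_conj_def)
  then have "sqrt 5 * golden_ratio ^ r * real (fib r)
      = golden_ratio ^ r * (golden_ratio ^ r - golden_ratio_conj ^ r)"
    by (metis mult.commute mult.left_commute)
  also have "\<dots> = (golden_ratio ^ r) ^ 2 - golden_ratio ^ r * golden_ratio_conj ^ r"
    by (simp add: power2_eq_square right_diff_distrib)
  finally show ?thesis
    unfolding power_mult_distrib[symmetric] golden_ratio_mult_conj .
qed

lemma golden_ratio_pow_mult_lucas:
  "golden_ratio ^ r * real (lucas r) = (golden_ratio ^ r) ^ 2 + (-1) ^ r"
proof -
  have "golden_ratio ^ r * real (lucas r)
      = (golden_ratio ^ r) ^ 2 + golden_ratio ^ r * golden_ratio_conj ^ r"
    unfolding lucas_closed_form by (simp add: power2_eq_square algebra_simps)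
  then show ?thesis
    unfolding power_mult_distrib[symmetric] golden_ratio_mult_conj .
qed

lemma lucas_ge_3: "2 \<le> n \<Longrightarrow> 3 \<le> lucas n"
  by (induction n rule: lucas.induct) (auto simp: le_Suc_eq)

lemma root_golden_ratio_pow:
  fixes r :: nat
  defines "c \<equiv> root 3 (golden_ratio ^ (2 * r))"
  shows "c ^ 3 = (golden_ratio ^ r) ^ 2" and "r \<noteq> 0 \<Longrightarrow> 1 < c" and "r = 0 \<Longrightarrow> c = 1"
proof -
  show "c ^ 3 = (golden_ratio ^ r) ^ 2"
    using golden_ratio_gt_1 by (simp add: c_def power_mult[symmetric] mult.commute)
  show "r = 0 \<Longrightarrow> c = 1"
    by (simp add: c_def)
  assume "r \<noteq> 0"
  then have "1 < golden_ratio ^ (2 * r)"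
    using golden_ratio_gt_1 by (simp add: one_less_power)
  then show "1 < c"
    by (simp add: c_def)
qed

lemma fib_series_sums:
  fixes r :: nat
  assumes r: "r \<noteq> 0"
  shows "(\<lambda>k. let n = Suc k in
           (-1) ^ (n * (r - 1)) * (27/5) ^ n /
           (real n ^ 2 * real (3 * n choose n) * real (fib r) ^ (2 * n)))
         sums (6 * (arctan (sqrt 3 / (2 * root 3 (golden_ratio ^ (2 * r)) + (-1) ^ r))) ^ 2
               - 1/2 * (ln (sqrt 5 * golden_ratio ^ r * real (fib r) /
                           (root 3 (golden_ratio ^ (2 * r)) - (-1) ^ r) ^ 3)) ^ 2)"
proof -
  define c where "c = root 3 (golden_ratio ^ (2 * r))"
  define b where "b = golden_ratio ^ r"
  define F where "F = real (fib r)"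
  define e where "e = - ((-1::real) ^ r)"
  have e_pow: "e = (-1) ^ (r - 1)"
    using r by (cases r) (simp_all add: e_def)
  have e: "e = 1 \<or> e = -1"
    unfolding e_pow by (cases "even (r - 1)") auto
  have "1 < c" "c ^ 3 = b ^ 2"
    using root_golden_ratio_pow[of r] r by (simp_all add: c_def b_def)
  have "1 \<le> F" "0 < b"
    using fib_neq_0_nat[of r] r golden_ratio_gt_1 by (simp_all add: F_def b_def)
  have X: "c ^ 3 + e = sqrt 5 * b * F"
    using golden_ratio_pow_mult_fib[of r] \<open>c ^ 3 = b ^ 2\<close> by (simp add: e_def b_def F_def)
  have t: "27 * c ^ 3 / (c ^ 3 + e) ^ 2 = (27 / 5) / F ^ 2"
    using \<open>0 < b\<close> \<open>1 \<le> F\<close> unfolding X unfolding \<open>c ^ 3 = b ^ 2\<close>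
    by (simp add: power_mult_distrib)
  have "27 * e * c ^ 3 / (c ^ 3 + e) ^ 2 = e * (27 * c ^ 3 / (c ^ 3 + e) ^ 2)"
    by simp
  also have "\<dots> = (-1) ^ (r - 1) * (27 / 5) / F ^ 2"
    unfolding t by (simp add: e_pow)
  finally have "27 * e * c ^ 3 / (c ^ 3 + e) ^ 2 = (-1) ^ (r - 1) * (27 / 5) / F ^ 2" .
  moreover have "(27 / 5) / F ^ 2 < 27 / 4"
    using one_le_power[OF \<open>1 \<le> F\<close>, of 2] by (simp add: divide_less_eq)
  moreover have "0 < c ^ 3 + e"
    using \<open>0 < b\<close> \<open>1 \<le> F\<close> unfolding X by simp
  ultimately have "(\<lambda>k. let n = Suc k in (-1) ^ (n * (r - 1)) * (27 / 5) ^ n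
      / (real n ^ 2 * real (3 * n choose n) * F ^ (2 * n)))
      sums (6 * arctan (sqrt 3 / (2 * c - e)) ^ 2 - 1 / 2 * ln ((c ^ 3 + e) / (c + e) ^ 3) ^ 2)"
    using \<open>1 < c\<close> t by (intro sums_closed_form_sign_div e) auto
  then show ?thesis
    unfolding X by (simp add: c_def b_def F_def e_def)
qed

lemma lucas_series_sums:
  fixes r :: nat
  assumes r: "r \<noteq> 1"
  shows "(\<lambda>k. let n = Suc k in
           (-1) ^ (n * r) * 27 ^ n /
           (real n ^ 2 * real (3 * n choose n) * real (lucas r) ^ (2 * n)))
         sums (6 * (arctan (sqrt 3 / (2 * root 3 (golden_ratio ^ (2 * r)) - (-1) ^ r))) ^ 2
               - 1/2 * (ln (golden_ratio ^ r * real (lucas r) /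
                           (root 3 (golden_ratio ^ (2 * r)) + (-1) ^ r) ^ 3)) ^ 2)"
proof -
  define c where "c = root 3 (golden_ratio ^ (2 * r))"
  define b where "b = golden_ratio ^ r"
  define L where "L = real (lucas r)"
  define e where "e = (-1::real) ^ r"
  have e: "e = 1 \<or> e = -1"
    unfolding e_def by (cases "even r") auto
  have "1 \<le> c"
    using root_golden_ratio_pow(2,3)[of r] by (cases "r = 0") (simp_all add: c_def)
  have "c ^ 3 = b ^ 2"
    using root_golden_ratio_pow(1)[of r] by (simp add: c_def b_def)
  have "1 \<le> L"
    using lucas_ge_3[of r] r by (cases "r = 0") (simp_all add: L_def)
  have "0 < b"
    using golden_ratio_gt_1 by (simp add: b_def)
  have X: "c ^ 3 + e = b * L"
    using golden_ratio_pow_mult_lucas[of r] \<open>c ^ 3 = b ^ 2\<close> by (simp add: e_def b_def L_def)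
  have t: "27 * c ^ 3 / (c ^ 3 + e) ^ 2 = 27 / L ^ 2"
    using \<open>0 < b\<close> \<open>1 \<le> L\<close> unfolding X unfolding \<open>c ^ 3 = b ^ 2\<close>
    by (simp add: power_mult_distrib)
  have "27 * e * c ^ 3 / (c ^ 3 + e) ^ 2 = e * (27 * c ^ 3 / (c ^ 3 + e) ^ 2)"
    by simp
  also have "\<dots> = (-1) ^ r * 27 / L ^ 2"
    unfolding t by (simp add: e_def)
  finally have "27 * e * c ^ 3 / (c ^ 3 + e) ^ 2 = (-1) ^ r * 27 / L ^ 2" .
  moreover have "27 / L ^ 2 < 27 / 4 \<or> c = 1"
  proof (cases "r = 0")
    case False
    then have "3 \<le> L"
      using lucas_ge_3[of r] r by (simp add: L_def)
    then have "9 \<le> L ^ 2"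
      using power_mono[OF \<open>3 \<le> L\<close>, of 2] by simp
    then show ?thesis
      by (simp add: divide_less_eq)
  qed (simp add: c_def)
  moreover have "0 < c ^ 3 + e"
    using \<open>0 < b\<close> \<open>1 \<le> L\<close> unfolding X by simp
  ultimately have "(\<lambda>k. let n = Suc k in (-1) ^ (n * r) * 27 ^ n
      / (real n ^ 2 * real (3 * n choose n) * L ^ (2 * n)))
      sums (6 * arctan (sqrt 3 / (2 * c - e)) ^ 2 - 1 / 2 * ln ((c ^ 3 + e) / (c + e) ^ 3) ^ 2)"
    using \<open>1 \<le> c\<close> t by (intro sums_closed_form_sign_div e) auto
  then show ?thesis
    unfolding X by (simp add: c_def b_def L_def e_def)
qed

theorem theorem1:
  fixes r :: nat
  shows "(r \<noteq> 0 \<longrightarrow>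
      (\<lambda>k. let n = Suc k in
         (-1) ^ (n * (r - 1)) * (27/5) ^ n /
         (real n ^ 2 * real (3 * n choose n) * real (fib r) ^ (2 * n)))
      sums (6 * (arctan (sqrt 3 / (2 * root 3 (golden_ratio ^ (2 * r)) + (-1) ^ r))) ^ 2
            - 1/2 * (ln (sqrt 5 * golden_ratio ^ r * real (fib r) /
                        (root 3 (golden_ratio ^ (2 * r)) - (-1) ^ r) ^ 3)) ^ 2))
   \<and> (r \<noteq> 1 \<longrightarrow>
      (\<lambda>k. let n = Suc k in
         (-1) ^ (n * r) * 27 ^ n /
         (real n ^ 2 * real (3 * n choose n) * real (lucas r) ^ (2 * n)))
      sums (6 * (arctan (sqrt 3 / (2 * root 3 (golden_ratio ^ (2 * r)) - (-1) ^ r))) ^ 2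
            - 1/2 * (ln (golden_ratio ^ r * real (lucas r) /
                        (root 3 (golden_ratio ^ (2 * r)) + (-1) ^ r) ^ 3)) ^ 2))"
  using fib_series_sums lucas_series_sums by blast

end
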